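(* Let $\kappa\ge 1$, $0\le \ell\le\kappa$, and consider the uncertain plant $$G(s)=\frac{\sum_{i=0}^{\ell}\beta_i s^{\ell-i}}{\sum_{i=0}^{\kappa}\alpha_i s^{\kappa-i}},\qquad \alpha_0=1,$$ with real uncertain parameter vector $\theta=(\alpha_1,\dots,\alpha_\kappa,\beta_0,\dots,\beta_\ell)\in\mathbb{R}^{\kappa+\ell+1}$. Let $\mathcal{B}\subset\mathbb{R}^{\kappa+\ell+1}$ be a nonempty bounded set (the assumed uncertainty range), and suppose there is a real controller $$C(s)=\frac{\sum_{i=0}^{m} b_i s^{m-i}}{\sum_{i=0}^{n} a_i s^{n-i}},\qquad a_0=1,\quad b_0\neq 0,\quad m\le n,$$ which robustly stabilizes the unity-feedback closed loop for every $\theta\in\mathcal{B}$, i.e. for every $\theta\in\mathcal{B}$ the closed-loop characteristic polynomial $$\chi_\theta(s)=\Big(\sum_{i=0}^{n}a_i s^{n-i}\Big)\Big(\sum_{j=0}^{\kappa}\alpha_j s^{\kappa-j}\Big)+\Big(\sum_{i=0}^{m}b_i s^{m-i}\Big)\Big(\sum_{j=0}^{\ell}\beta_j s^{\ell-j}\Big)$$ has all its roots in the open left half-plane. Then there exists a parameter vector $\theta'\notin\mathcal{B}$, obtained from some element of $\mathcal{B}$ by changing a single coordinate $\alpha_i$ or $\beta_j$, for which $\chi_{\theta'}$ has a root with nonnegative real part (i.e. the closed-loop system with the same controller is unstable).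
   Context: Unity negative feedback: the closed-loop system is $C G/(1+CG)$; "stable" means the characteristic polynomial $\chi_\theta$ (which is monic of degree $n+\kappa$) is Hurwitz, i.e. all roots have strictly negative real part. *)

theory Defs
  imports "HOL-Computational_Algebra.Polynomial" Complex_Main
begin

text \<open>Parameter vector theta = (alpha_1..alpha_kappa, beta_0..beta_ell) as a real list
 of length kappa+ell+1: theta!(j-1) = alpha_j (1 <= j <= kappa), theta!(kappa+j) = beta_j.\<close>

definition plant_den :: "nat \<Rightarrow> real list \<Rightarrow> real poly" where
  "plant_den \<kappa> \<theta> = monom 1 \<kappa> + (\<Sum>j\<in>{1..\<kappa>}. monom (\<theta> ! (j - 1)) (\<kappa> - j))"

definition plant_num :: "nat \<Rightarrow> nat \<Rightarrow> real list \<Rightarrow> real poly" where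
  "plant_num \<kappa> l \<theta> = (\<Sum>j\<le>l. monom (\<theta> ! (\<kappa> + j)) (l - j))"

definition ctrl_poly :: "nat \<Rightarrow> (nat \<Rightarrow> real) \<Rightarrow> real poly" where
  "ctrl_poly n c = (\<Sum>i\<le>n. monom (c i) (n - i))"

definition char_poly ::
  "nat \<Rightarrow> (nat \<Rightarrow> real) \<Rightarrow> nat \<Rightarrow> (nat \<Rightarrow> real) \<Rightarrow> nat \<Rightarrow> nat \<Rightarrow> real list \<Rightarrow> real poly" where
  "char_poly n a m b \<kappa> l \<theta> =
     ctrl_poly n a * plant_den \<kappa> \<theta> + ctrl_poly m b * plant_num \<kappa> l \<theta>"

definition hurwitz :: "real poly \<Rightarrow> bool" where
  "hurwitz p \<longleftrightarrow> (\<forall>z. poly (map_poly complex_of_real p) z = 0 \<longrightarrow> Re z < 0)"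

end

theory Submission
  imports Defs
begin

(* The constant coefficient of the closed-loop characteristic
   polynomial is  a_n * alpha_kappa + b_m * beta_ell : it depends on the plant
   only through the two coordinates alpha_kappa and beta_ell of theta.  Starting
   from any theta in B, we change one of these two coordinates so that this
   constant coefficient vanishes: if a_n = 0 we set beta_ell := 0, otherwise we
   solve for alpha_kappa.  The resulting characteristic polynomial has the root
   s = 0, which has nonnegative real part; a Hurwitz polynomial cannot vanish at
   0, so the modified parameter vector lies outside B.  The argument does not
   use the boundedness of B nor the normalisations a_0 = 1, b_0 <> 0, m <= n. *)

lemma coeff_0_sum_monom_desc:
  fixes c :: "nat \<Rightarrow> 'a::comm_monoid_add"
  assumes "finite I" and "k \<in> I" and "\<And>j. j \<in> I \<Longrightarrow> j \<le> k"
  shows "coeff (\<Sum>j\<in>I. monom (c j) (k - j)) 0 = c k"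
proof -
  have "coeff (\<Sum>j\<in>I. monom (c j) (k - j)) 0 = (\<Sum>j\<in>I. if j = k then c k else 0)"
    unfolding coeff_sum using assms(3) by (intro sum.cong) force+
  also have "\<dots> = c k" using assms(1,2) by simp
  finally show ?thesis .
qed

lemma coeff_0_ctrl_poly: "coeff (ctrl_poly n c) 0 = c n"
  unfolding ctrl_poly_def by (rule coeff_0_sum_monom_desc) auto

lemma coeff_0_plant_num: "coeff (plant_num \<kappa> l \<theta>) 0 = \<theta> ! (\<kappa> + l)"
  unfolding plant_num_def by (rule coeff_0_sum_monom_desc) auto

lemma coeff_0_plant_den:
  assumes "\<kappa> \<ge> 1"
  shows "coeff (plant_den \<kappa> \<theta>) 0 = \<theta> ! (\<kappa> - 1)"
proof -
  have "coeff (monom (1::real) \<kappa>) 0 = 0" using assms by simp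
  moreover have "coeff (\<Sum>j\<in>{1..\<kappa>}. monom (\<theta> ! (j - 1)) (\<kappa> - j)) 0 = \<theta> ! (\<kappa> - 1)"
    using assms by (rule_tac c = "\<lambda>j. \<theta> ! (j - 1)" in coeff_0_sum_monom_desc) auto
  ultimately show ?thesis by (simp add: plant_den_def)
qed

lemma coeff_0_char_poly:
  assumes "\<kappa> \<ge> 1"
  shows "coeff (char_poly n a m b \<kappa> l \<theta>) 0 = a n * \<theta> ! (\<kappa> - 1) + b m * \<theta> ! (\<kappa> + l)"
  using assms
  by (simp add: char_poly_def coeff_mult_0 coeff_0_ctrl_poly coeff_0_plant_den coeff_0_plant_num)

lemma complex_root_0:
  fixes p :: "real poly"
  assumes "coeff p 0 = 0"
  shows "poly (map_poly complex_of_real p) 0 = 0"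
  using assms by (simp add: poly_0_coeff_0 coeff_map_poly)

lemma hurwitz_coeff_0_nonzero:
  assumes "hurwitz p"
  shows "coeff p 0 \<noteq> 0"
proof
  assume "coeff p 0 = 0"
  then have "poly (map_poly complex_of_real p) 0 = 0" by (rule complex_root_0)
  with assms have "Re 0 < 0" unfolding hurwitz_def by blast
  then show False by simp
qed

lemma single_coordinate_kills_constant_term:
  fixes \<theta> :: "real list"
  assumes "\<kappa> \<ge> 1" and "length \<theta> = \<kappa> + l + 1"
  obtains i x where "i < \<kappa> + l + 1"
    and "a n * \<theta>[i := x] ! (\<kappa> - 1) + b m * \<theta>[i := x] ! (\<kappa> + l) = 0"
proof (cases "a n = 0")
  case True
  have "\<theta>[\<kappa> + l := 0] ! (\<kappa> + l) = 0" using assms(2) by simp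
  with True show ?thesis by (intro that[of "\<kappa> + l" 0]) simp_all
next
  case False
  define x where "x = - (b m * \<theta> ! (\<kappa> + l)) / a n"
  have "\<theta>[\<kappa> - 1 := x] ! (\<kappa> - 1) = x" and "\<theta>[\<kappa> - 1 := x] ! (\<kappa> + l) = \<theta> ! (\<kappa> + l)"
    using assms by auto
  moreover have "a n * x + b m * \<theta> ! (\<kappa> + l) = 0"
    using False by (simp add: x_def)
  ultimately show ?thesis by (intro that[of "\<kappa> - 1" x]) simp_all
qed

theorem theorem1:
  fixes \<kappa> l n m :: nat and a b :: "nat \<Rightarrow> real" and B :: "real list set"
  assumes "\<kappa> \<ge> 1" and "l \<le> \<kappa>"
    and "B \<noteq> {}"
    and "\<forall>\<theta>\<in>B. length \<theta> = \<kappa> + l + 1"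
    and "\<exists>M. \<forall>\<theta>\<in>B. \<forall>i<length \<theta>. \<bar>\<theta> ! i\<bar> \<le> M"
    and "a 0 = 1" and "b 0 \<noteq> 0" and "m \<le> n"
    and "\<forall>\<theta>\<in>B. hurwitz (char_poly n a m b \<kappa> l \<theta>)"
  shows "\<exists>\<theta>\<in>B. \<exists>i < \<kappa> + l + 1. \<exists>x::real.
           \<theta>[i := x] \<notin> B \<and>
           (\<exists>z. poly (map_poly complex_of_real (char_poly n a m b \<kappa> l (\<theta>[i := x]))) z = 0
                \<and> Re z \<ge> 0)"
proof -
  obtain \<theta> where \<theta>: "\<theta> \<in> B" using assms(3) by blast
  then have "length \<theta> = \<kappa> + l + 1" using assms(4) by blast
  then obtain i x where i: "i < \<kappa> + l + 1"
    and const_0: "a n * \<theta>[i := x] ! (\<kappa> - 1) + b m * \<theta>[i := x] ! (\<kappa> + l) = 0"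
    by (rule single_coordinate_kills_constant_term[OF assms(1)])
  let ?\<chi> = "char_poly n a m b \<kappa> l (\<theta>[i := x])"
  have coeff_0: "coeff ?\<chi> 0 = 0"
    using const_0 by (simp only: coeff_0_char_poly[OF assms(1)])
  then have outside: "\<theta>[i := x] \<notin> B"
    using assms(9) hurwitz_coeff_0_nonzero by blast
  have "poly (map_poly complex_of_real ?\<chi>) 0 = 0"
    using coeff_0 by (rule complex_root_0)
  then have "\<exists>z. poly (map_poly complex_of_real ?\<chi>) z = 0 \<and> Re z \<ge> 0"
    by (intro exI[of _ 0]) simp
  with outside \<theta> i show ?thesis by blast
qed

end
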